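(* Let $a$ be a real number with $a\ge 3$ and let $k\in\mathbb{N}$. Then $$\frac{2\cdot(2k)!}{\pi^{2k}(2^{2k}-1)}\,\frac{a^{2k}}{a^{2k}-1} < |B_{2k}|.$$
   Context: $B_n$ denotes the Bernoulli numbers, defined by $\frac{x}{e^x-1}=\sum_{n=0}^\infty B_n \frac{x^n}{n!}$ for $|x|<2\pi$. $\mathbb{N}=\{1,2,3,\dots\}$. *)

theory Defs
  imports "HOL-Analysis.Analysis"
begin

text \<open>Bernoulli numbers, defined (as in the paper) as the unique real sequence B with
  x / (exp x - 1) = sum of B n * x^n / n! for 0 < |x| < 2 pi
  (at x = 0 the left side is read as its limit 1, which only constrains B 0).\<close>
definition bernoulli_num :: "nat \<Rightarrow> real" where
  "bernoulli_num = (THE B. \<forall>x::real. \<bar>x\<bar> < 2 * pi \<longrightarrow>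
      (\<lambda>n. B n * x ^ n / fact n) sums (if x = 0 then 1 else x / (exp x - 1)))"

end

theory Submission
  imports Defs
begin

(* Taking the logarithmic derivative of the reflection formula
   Gamma(z) Gamma(1 - z) = pi / sin(pi z) gives the partial fraction expansion of pi cot(pi z).
   At z = i x / (2 pi) it becomes x / (e^x - 1) = 1 - x/2 + sum_n 2 x^2 / (x^2 + (2 pi n)^2);
   expanding each term geometrically and exchanging the two sums yields the Taylor series of
   x / (e^x - 1), hence Euler's formula |B_2k| = 2 (2k)! zeta(2k) / (2 pi)^2k.  Finally
   (1 - 2^-2k) zeta(2k) is the sum of n^-2k over odd n, which is at least 1 + 3^-2k + 5^-2k,
   and this exceeds a^2k / (a^2k - 1) for a >= 3 because 3^p + 5^p < 9^p. *)

lemma sums_swap: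
  fixes f :: "nat \<Rightarrow> nat \<Rightarrow> 'a::banach"
  assumes rows: "\<And>n. summable (\<lambda>k. norm (f n k))"
    and total: "summable (\<lambda>n. \<Sum>k. norm (f n k))"
  shows "(\<lambda>k. \<Sum>n. f n k) sums (\<Sum>n. \<Sum>k. f n k)"
proof -
  have "(\<lambda>(n, k). norm (f n k)) summable_on UNIV \<times> UNIV"
  proof (rule summable_on_SigmaI[where g = "\<lambda>n. \<Sum>k. norm (f n k)"])
    show "((\<lambda>k. case (n, k) of (n, k) \<Rightarrow> norm (f n k)) has_sum (\<Sum>k. norm (f n k))) UNIV" for n
      using rows[of n] by (intro norm_summable_imp_has_sum) (simp_all add: summable_sums)
    show "(\<lambda>n. \<Sum>k. norm (f n k)) summable_on UNIV"
      using total by (simp add: summable_on_UNIV_nonneg_real_iff suminf_nonneg rows)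
  qed simp
  then have "(\<lambda>(n, k). f n k) summable_on UNIV \<times> UNIV"
    using abs_summable_summable[of "\<lambda>(n, k). f n k"] by (simp add: case_prod_unfold)
  then obtain S where S: "((\<lambda>(n, k). f n k) has_sum S) (UNIV \<times> UNIV)"
    by (auto simp: summable_on_def)
  have cols: "summable (\<lambda>n. norm (f n k))" for k
  proof (rule summable_comparison_test'[OF total])
    show "norm (norm (f n k)) \<le> (\<Sum>k. norm (f n k))" for n
      using sum_le_suminf[OF rows, of "{k}"] by auto
  qed
  have has_sum_suminf: "((\<lambda>i. g i) has_sum (\<Sum>i. g i)) UNIV"
    if "summable (\<lambda>i. norm (g i))" for g :: "nat \<Rightarrow> 'a"
    using norm_summable_imp_has_sum[OF that summable_sums[OF summable_norm_cancel[OF that]]] .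
  have "((\<lambda>n. \<Sum>k. f n k) has_sum S) UNIV"
    using has_sum_SigmaD[OF S, where g = "\<lambda>n. \<Sum>k. f n k"] has_sum_suminf[OF rows] by simp
  moreover have "((\<lambda>k. \<Sum>n. f n k) has_sum S) UNIV"
    using has_sum_SigmaD[OF has_sum_swap[THEN iffD1, OF S], where g = "\<lambda>k. \<Sum>n. f n k"]
      has_sum_suminf[OF cols] by simp
  ultimately show ?thesis
    by (metis has_sum_imp_sums sums_unique)
qed

lemma sums_even_terms:
  fixes f :: "nat \<Rightarrow> 'a::real_normed_vector"
  assumes "f sums s" and "(\<lambda>n. f (2 * n + 1)) sums t"
  shows "(\<lambda>n. f (2 * n)) sums (s - t)"
proof -
  have "strict_mono (\<lambda>n. 2 * n + 1 :: nat)"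
    by (auto simp: strict_mono_def)
  moreover have "(if even n then 0 else f n) = 0" if "n \<notin> range (\<lambda>n. 2 * n + 1)" for n
    using that by (auto elim!: oddE)
  ultimately have "(\<lambda>n. if even n then 0 else f n) sums t"
    using sums_mono_reindex[of "\<lambda>n. 2 * n + 1" "\<lambda>n. if even n then 0 else f n"] assms(2) by simp
  from sums_diff[OF assms(1) this]
  have "(\<lambda>n. if even n then f n else 0) sums (s - t)"
    by (simp add: if_distrib cong: if_cong)
  moreover have "strict_mono (\<lambda>n. 2 * n :: nat)"
    by (auto simp: strict_mono_def)
  moreover have "(if even n then f n else 0) = 0" if "n \<notin> range (\<lambda>n. 2 * n)" for n
    using that by (auto elim!: evenE)
  ultimately show ?thesis
    using sums_mono_reindex[of "\<lambda>n. 2 * n" "\<lambda>n. if even n then f n else 0"] by simp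
qed

lemma powser_sums_zero_imp_coeffs_zero:
  fixes a :: "nat \<Rightarrow> 'a::{real_normed_field,banach}"
  assumes "0 < s" and "\<And>x. x \<noteq> 0 \<Longrightarrow> norm x < s \<Longrightarrow> (\<lambda>n. a n * x ^ n) sums 0"
  shows "a m = 0"
  using assms(2)
proof (induction m arbitrary: a)
  case 0
  have "((\<lambda>_. 0) \<longlongrightarrow> a 0) (at (0 :: 'a))"
    by (rule powser_limit_0_strong[where f = "\<lambda>_. 0", OF \<open>0 < s\<close>]) (use 0 in auto)
  then show ?case
    by (simp add: tendsto_const_iff)
next
  case (Suc m)
  have "((\<lambda>_. 0) \<longlongrightarrow> a 0) (at (0 :: 'a))"
    by (rule powser_limit_0_strong[where f = "\<lambda>_. 0", OF \<open>0 < s\<close>]) (use Suc.prems in auto)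
  then have "a 0 = 0"
    by (simp add: tendsto_const_iff)
  have "(\<lambda>n. a (Suc n) * x ^ n) sums 0" if "x \<noteq> 0" "norm x < s" for x
  proof -
    have "(\<lambda>n. a (Suc n) * x ^ Suc n) sums 0"
      using Suc.prems[OF that] \<open>a 0 = 0\<close> by (subst sums_Suc_iff) simp
    from sums_divide[OF this, of x] show ?thesis
      using \<open>x \<noteq> 0\<close> by simp
  qed
  then show ?case
    by (rule Suc.IH)
qed

lemma pi_cot_eq_Digamma_diff:
  fixes z :: complex
  assumes "z \<notin> \<int>"
  shows "of_real pi * cot (of_real pi * z) = Digamma (1 - z) - Digamma z"
proof -
  have "1 - z \<notin> \<int>"
    using assms Ints_diff[of 1 "1 - z"] by auto
  with assms have poles: "z \<notin> \<int>\<^sub>\<le>\<^sub>0" "1 - z \<notin> \<int>\<^sub>\<le>\<^sub>0"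
    using nonpos_Ints_subset_Ints by blast+
  have sin_nz: "sin (of_real pi * z) \<noteq> 0"
    using assms by (subst sin_eq_0) auto
  define G where "G w = Gamma w * Gamma (1 - w)" for w :: complex
  have reflection: "G = (\<lambda>w. of_real pi / sin (of_real pi * w))"
    using Gamma_reflection_complex by (auto simp: G_def)
  have "(G has_field_derivative G z * (Digamma z - Digamma (1 - z))) (at z)"
    unfolding G_def using poles by (auto intro!: derivative_eq_intros simp: algebra_simps)
  moreover have "(G has_field_derivative G z * (- of_real pi * cot (of_real pi * z))) (at z)"
    unfolding reflection using sin_nz
    by (auto intro!: derivative_eq_intros simp: cot_def power2_eq_square field_simps)
  ultimately have "G z * (Digamma z - Digamma (1 - z)) = G z * (- of_real pi * cot (of_real pi * z))"
    by (rule DERIV_unique)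
  moreover have "G z \<noteq> 0"
    using sin_nz by (simp add: reflection)
  ultimately have "Digamma z - Digamma (1 - z) = - of_real pi * cot (of_real pi * z)"
    by (metis mult_left_cancel)
  then show ?thesis
    by (simp add: algebra_simps)
qed

lemma pi_cot_partial_fraction_sums:
  fixes z :: complex
  assumes "z \<notin> \<int>"
  shows "(\<lambda>n. 2 * z / (z\<^sup>2 - (of_nat n + 1)\<^sup>2)) sums (of_real pi * cot (of_real pi * z) - 1 / z)"
proof -
  have "z \<noteq> 0" "1 - z \<noteq> 0"
    using assms by (auto simp: Ints_1 Ints_0)
  have nz: "z + of_nat n \<noteq> 0" "of_nat n + 1 - z \<noteq> 0" "z\<^sup>2 - (of_nat n + 1)\<^sup>2 \<noteq> 0" for n
  proof -
    have "z \<noteq> - of_nat n" "z \<noteq> of_nat n + 1" "z \<noteq> - (of_nat n + 1)"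
      using assms Ints_of_nat Ints_minus Ints_add Ints_1 by metis+
    then show "z + of_nat n \<noteq> 0" "of_nat n + 1 - z \<noteq> 0" "z\<^sup>2 - (of_nat n + 1)\<^sup>2 \<noteq> 0"
      by (auto simp: add_eq_0_iff power2_eq_iff)
  qed
  define a where "a n = inverse (z + of_nat n)" for n
  define b where "b n = inverse (1 - z + of_nat n)" for n
  have "(\<lambda>n. inverse (of_nat (Suc n)) - a n) sums (Digamma z + euler_mascheroni)"
    using summable_Digamma[OF \<open>z \<noteq> 0\<close>] by (simp add: a_def Digamma_def summable_sums)
  moreover have "(\<lambda>n. inverse (of_nat (Suc n)) - b n) sums (Digamma (1 - z) + euler_mascheroni)"
    using summable_Digamma[OF \<open>1 - z \<noteq> 0\<close>] by (simp add: b_def Digamma_def summable_sums)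
  ultimately have "(\<lambda>n. a n - b n) sums (of_real pi * cot (of_real pi * z))"
    using sums_diff pi_cot_eq_Digamma_diff[OF assms] by fastforce
  moreover have "a \<longlonglongrightarrow> 0"
    unfolding a_def
    by (intro filterlim_compose[OF tendsto_inverse_0]
        tendsto_add_filterlim_at_infinity[OF tendsto_const] tendsto_of_nat)
  then have "(\<lambda>n. a n - a (Suc n)) sums (1 / z)"
    using telescope_sums' by (fastforce simp: a_def divide_inverse)
  ultimately have "(\<lambda>n. a (Suc n) - b n) sums (of_real pi * cot (of_real pi * z) - 1 / z)"
    using sums_diff by fastforce
  moreover have "a (Suc n) - b n = 2 * z / (z\<^sup>2 - (of_nat n + 1)\<^sup>2)" for n
    using nz[of "Suc n"] nz[of n] by (simp add: a_def b_def field_simps power2_eq_square)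
  ultimately show ?thesis
    by simp
qed

lemma bernoulli_gf_partial_fraction_sums:
  fixes x :: real
  assumes "x \<noteq> 0"
  shows "(\<lambda>n. 2 * (x / (2 * pi))\<^sup>2 / ((x / (2 * pi))\<^sup>2 + (real n + 1)\<^sup>2))
           sums (x / (exp x - 1) + x / 2 - 1)"
proof -
  define y where "y = x / (2 * pi)"
  define w where "w = complex_of_real (x / 2)"
  define z where "z = \<i> * of_real y"
  have "z \<notin> \<int>"
    using assms by (auto simp: z_def y_def complex_eq_iff elim!: Ints_cases)
  from sums_mult[OF pi_cot_partial_fraction_sums[OF this], of z]
  have "(\<lambda>n. z * (2 * z / (z\<^sup>2 - (of_nat n + 1)\<^sup>2)))
      sums (z * (of_real pi * cot (of_real pi * z) - 1 / z))" .
  moreover have "z * (2 * z / (z\<^sup>2 - (of_nat n + 1)\<^sup>2))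
      = of_real (2 * (x / (2 * pi))\<^sup>2 / ((x / (2 * pi))\<^sup>2 + (real n + 1)\<^sup>2))" for n
  proof -
    define c where "c = complex_of_real (y\<^sup>2)"
    have "z * z = - c"
      by (simp add: z_def c_def power2_eq_square algebra_simps)
    then have "z * (2 * z / (z\<^sup>2 - (of_nat n + 1)\<^sup>2)) = 2 * - c / (- c - (of_nat n + 1)\<^sup>2)"
      by (simp add: power2_eq_square[of z] mult.left_commute[of z 2 z])
    also have "\<dots> = 2 * c / (c + (of_nat n + 1)\<^sup>2)"
      using minus_divide_divide[of "2 * c" "c + (of_nat n + 1)\<^sup>2"] by (simp add: algebra_simps)
    finally show ?thesis
      by (simp add: c_def y_def)
  qed
  moreover have "z * (of_real pi * cot (of_real pi * z) - 1 / z)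
      = of_real (x / (exp x - 1) + x / 2 - 1)"
  proof -
    define E where "E = exp w"
    have "exp x \<noteq> 1"
      using assms by simp
    have EE: "E * E = of_real (exp x)"
      by (simp add: E_def w_def exp_of_real flip: exp_add)
    then have "E * E \<noteq> 1" "E \<noteq> 0"
      using \<open>exp x \<noteq> 1\<close> by (auto simp: E_def)
    then have "E - inverse E \<noteq> 0"
      by (simp add: field_simps)
    have "of_real pi * z = \<i> * w" "z \<noteq> 0"
      using assms by (simp_all add: z_def w_def y_def)
    then have "z * (of_real pi * cot (of_real pi * z) - 1 / z) = \<i> * w * cot (\<i> * w) - 1"
      by (simp add: right_diff_distrib mult.left_commute[of z])
    also have "\<i> * w * cot (\<i> * w) = w * (E + inverse E) / (E - inverse E)"
      using \<open>E - inverse E \<noteq> 0\<close>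
      by (simp add: cot_def sin_i_times E_def flip: cosh_complex) (simp add: field_simps)
    also have "\<dots> = w * (E * E + 1) / (E * E - 1)"
      using \<open>E \<noteq> 0\<close> \<open>E * E \<noteq> 1\<close> by (simp add: field_simps)
    also have "\<dots> - 1 = of_real (x / 2 * (exp x + 1) / (exp x - 1) - 1)"
      by (simp add: EE w_def)
    also have "x / 2 * (exp x + 1) / (exp x - 1) - 1 = x / (exp x - 1) + x / 2 - 1"
      using \<open>exp x \<noteq> 1\<close> by (simp add: field_simps)
    finally show ?thesis .
  qed
  ultimately show ?thesis
    by (simp only: sums_of_real_iff)
qed

(* Only meaningful for 2 <= p: for smaller p the series diverges and suminf returns a junk value. *)
definition zeta :: "nat \<Rightarrow> real" where
  "zeta p = (\<Sum>n. 1 / (real n + 1) ^ p)"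

lemma summable_zeta:
  assumes "2 \<le> p"
  shows "summable (\<lambda>n. 1 / (real n + 1) ^ p)"
  using inverse_power_summable[of p] assms summable_Suc_iff[of "\<lambda>n. inverse (real n ^ p)"]
  by (simp add: inverse_eq_divide add.commute)

lemma sums_zeta: "2 \<le> p \<Longrightarrow> (\<lambda>n. 1 / (real n + 1) ^ p) sums zeta p"
  unfolding zeta_def by (rule summable_sums[OF summable_zeta])

lemma sums_zeta_powser:
  fixes q :: real
  assumes "\<bar>q\<bar> < 1"
  shows "(\<lambda>k. (-1) ^ k * zeta (2 * k + 2) * q ^ (k + 1)) sums (\<Sum>n. q / (q + (real n + 1)\<^sup>2))"
proof -
  define r where "r n = q / (real n + 1)\<^sup>2" for n
  have r_le: "\<bar>r n\<bar> \<le> \<bar>q\<bar>" for n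
  proof -
    have "\<bar>q\<bar> / (real n + 1)\<^sup>2 \<le> \<bar>q\<bar> / 1"
      by (rule divide_left_mono) auto
    then show ?thesis
      by (simp add: r_def)
  qed
  define f where "f n k = r n * (- r n) ^ k" for n k
  have row: "(\<lambda>k. f n k) sums (q / (q + (real n + 1)\<^sup>2))" for n
  proof -
    have "(\<lambda>k. f n k) sums (r n / (1 + r n))"
      using sums_mult[OF geometric_sums[of "- r n"], of "r n"] r_le[of n] assms
      by (simp add: f_def divide_inverse)
    moreover have "r n / (1 + r n) = q / (q + (real n + 1)\<^sup>2)"
      by (simp add: r_def field_simps)
    ultimately show ?thesis
      by simp
  qed
  have row_norm: "(\<lambda>k. norm (f n k)) sums (\<bar>r n\<bar> / (1 - \<bar>r n\<bar>))" for n
    using sums_mult[OF geometric_sums[of "\<bar>r n\<bar>"], of "\<bar>r n\<bar>"] r_le[of n] assms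
    by (simp add: f_def abs_mult power_abs divide_inverse)
  have "summable (\<lambda>n. \<Sum>k. norm (f n k))"
  proof (rule summable_comparison_test')
    show "summable (\<lambda>n. \<bar>q\<bar> / (1 - \<bar>q\<bar>) * (1 / (real n + 1) ^ 2))"
      by (intro summable_mult summable_zeta) simp
    show "norm (\<Sum>k. norm (f n k)) \<le> \<bar>q\<bar> / (1 - \<bar>q\<bar>) * (1 / (real n + 1) ^ 2)" for n
    proof -
      have "norm (\<Sum>k. norm (f n k)) = \<bar>r n\<bar> / (1 - \<bar>r n\<bar>)"
        using sums_unique[OF row_norm[of n], symmetric] r_le[of n] assms by simp
      also have "\<dots> \<le> \<bar>r n\<bar> / (1 - \<bar>q\<bar>)"
        by (rule divide_left_mono) (use r_le[of n] assms in auto)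
      also have "\<dots> = \<bar>q\<bar> / (1 - \<bar>q\<bar>) * (1 / (real n + 1) ^ 2)"
        by (simp add: r_def)
      finally show ?thesis .
    qed
  qed
  from sums_swap[OF sums_summable[OF row_norm] this]
  have "(\<lambda>k. \<Sum>n. f n k) sums (\<Sum>n. q / (q + (real n + 1)\<^sup>2))"
    using row by (simp add: sums_iff)
  moreover have "(\<lambda>n. f n k) sums ((-1) ^ k * zeta (2 * k + 2) * q ^ (k + 1))" for k
  proof -
    have "f n k = (-1) ^ k * q ^ (k + 1) * (1 / (real n + 1) ^ (2 * k + 2))" for n
      by (simp add: f_def r_def power_minus' power_divide power_mult power2_eq_square
          power_mult_distrib mult_ac)
    then show ?thesis
      using sums_mult[OF sums_zeta[of "2 * k + 2"], of "(-1) ^ k * q ^ (k + 1)"] by (simp add: mult_ac)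
  qed
  ultimately show ?thesis
    by (simp add: sums_iff)
qed

lemma sums_zeta_odd:
  assumes "2 \<le> p"
  shows "(\<lambda>n. 1 / (2 * real n + 1) ^ p) sums ((1 - 1 / 2 ^ p) * zeta p)"
proof -
  have "(\<lambda>n. 1 / (real (2 * n + 1) + 1) ^ p) sums (zeta p / 2 ^ p)"
  proof -
    have "(real (2 * n + 1) + 1) ^ p = 2 ^ p * (real n + 1) ^ p" for n
      by (simp add: algebra_simps flip: power_mult_distrib)
    then show ?thesis
      using sums_divide[OF sums_zeta[OF assms], of "2 ^ p"] by (simp add: mult.commute)
  qed
  from sums_even_terms[OF sums_zeta[OF assms] this]
  show ?thesis
    by (simp add: algebra_simps)
qed

lemma zeta_odd_lower_bound:
  assumes "2 \<le> p"
  shows "1 + 1 / 3 ^ p + 1 / 5 ^ p \<le> (1 - 1 / 2 ^ p) * zeta p"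
proof -
  note odd = sums_zeta_odd[OF assms]
  have "(\<Sum>n\<in>{0, 1, 2}. 1 / (2 * real n + 1) ^ p) \<le> (\<Sum>n. 1 / (2 * real n + 1) ^ p)"
    by (rule sum_le_suminf[OF sums_summable[OF odd]]) auto
  then show ?thesis
    by (simp add: sums_unique[OF odd, symmetric] eval_nat_numeral)
qed

definition bernoulli_zeta :: "nat \<Rightarrow> real" where
  "bernoulli_zeta n =
     (if n = 0 then 1 else if n = 1 then - 1 / 2 else if odd n then 0
      else 2 * (-1) ^ (n div 2 + 1) * fact n * zeta n / (2 * pi) ^ n)"

lemma bernoulli_zeta_sums:
  fixes x :: real
  assumes "\<bar>x\<bar> < 2 * pi"
  shows "(\<lambda>n. bernoulli_zeta n * x ^ n / fact n) sums (if x = 0 then 1 else x / (exp x - 1))"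
proof (cases "x = 0")
  case True
  then show ?thesis
    using powser_sums_zero[of "\<lambda>n. bernoulli_zeta n / fact n"] by (simp add: bernoulli_zeta_def)
next
  case False
  define h where "h n = bernoulli_zeta n * x ^ n / fact n" for n
  define q where "q = (x / (2 * pi))\<^sup>2"
  have "\<bar>x / (2 * pi)\<bar> < 1"
    using assms by (simp add: abs_divide)
  then have "\<bar>q\<bar> < 1"
    by (simp add: q_def abs_square_less_1)
  define S where "S = x / (exp x - 1) + x / 2 - 1"
  have "(\<lambda>n. q / (q + (real n + 1)\<^sup>2)) sums (S / 2)"
    using sums_mult[OF bernoulli_gf_partial_fraction_sums[OF False], of "1 / 2"]
    by (simp add: q_def S_def)
  with sums_mult[OF sums_zeta_powser[OF \<open>\<bar>q\<bar> < 1\<close>], of 2]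
  have "(\<lambda>k. 2 * ((-1) ^ k * zeta (2 * k + 2) * q ^ (k + 1))) sums S"
    by (simp add: sums_iff)
  moreover have "h (2 * k + 2) = 2 * ((-1) ^ k * zeta (2 * k + 2) * q ^ (k + 1))" for k
  proof -
    have "2 * k + 2 = 2 * (k + 1)"
      by simp
    then have "q ^ (k + 1) = x ^ (2 * k + 2) / (2 * pi) ^ (2 * k + 2)"
      by (simp only: q_def power_divide flip: power_mult)
    then show ?thesis
      by (simp add: h_def bernoulli_zeta_def)
  qed
  ultimately have "(\<lambda>k. h (2 * k + 2)) sums S"
    by simp
  then have "(\<lambda>m. h (m + 2)) sums S"
  proof (subst sums_mono_reindex[of "\<lambda>k. 2 * k", symmetric])
    show "strict_mono (\<lambda>k. 2 * k :: nat)"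
      by (auto simp: strict_mono_def)
    show "h (m + 2) = 0" if "m \<notin> range (\<lambda>k. 2 * k)" for m
      using that by (auto simp: h_def bernoulli_zeta_def elim!: evenE)
  qed (simp add: add.commute)
  then have "h sums (S + (\<Sum>i<2. h i))"
    by (subst (asm) sums_iff_shift)
  then have "h sums (x / (exp x - 1))"
    by (simp add: h_def S_def bernoulli_zeta_def numeral_2_eq_2)
  then show ?thesis
    using False by (simp add: h_def[abs_def])
qed

lemma bernoulli_num_eq_bernoulli_zeta: "bernoulli_num = bernoulli_zeta"
  unfolding bernoulli_num_def
proof (rule the_equality)
  show "\<forall>x. \<bar>x\<bar> < 2 * pi \<longrightarrow>
      (\<lambda>n. bernoulli_zeta n * x ^ n / fact n) sums (if x = 0 then 1 else x / (exp x - 1))"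
    using bernoulli_zeta_sums by blast
next
  fix B
  assume B: "\<forall>x. \<bar>x\<bar> < 2 * pi \<longrightarrow>
      (\<lambda>n. B n * x ^ n / fact n) sums (if x = 0 then 1 else x / (exp x - 1))"
  have "(B m - bernoulli_zeta m) / fact m = 0" for m
  proof (rule powser_sums_zero_imp_coeffs_zero[of "2 * pi"])
    show "(\<lambda>n. (B n - bernoulli_zeta n) / fact n * x ^ n) sums 0" if "norm x < 2 * pi" for x :: real
      using sums_diff[OF B[rule_format] bernoulli_zeta_sums, of x x] that
      by (simp add: diff_divide_distrib left_diff_distrib)
  qed simp
  then show "B = bernoulli_zeta"
    by auto
qed

lemma abs_bernoulli_num_even:
  assumes "1 \<le> k"
  shows "\<bar>bernoulli_num (2 * k)\<bar> = 2 * fact (2 * k) * zeta (2 * k) / (2 * pi) ^ (2 * k)"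
proof -
  have "0 \<le> zeta (2 * k)"
    unfolding zeta_def using assms by (intro suminf_nonneg summable_zeta) auto
  then show ?thesis
    using assms by (simp add: bernoulli_num_eq_bernoulli_zeta bernoulli_zeta_def abs_mult)
qed

lemma five_pow_plus_three_pow_less: "1 \<le> p \<Longrightarrow> (5::real) ^ p + 3 ^ p < 9 ^ p"
proof (induction p rule: dec_induct)
  case (step p)
  have "(5::real) ^ Suc p + 3 ^ Suc p \<le> 5 * (5 ^ p + 3 ^ p)"
    by simp
  also have "\<dots> < 5 * 9 ^ p"
    using step.IH by simp
  also have "\<dots> \<le> 9 * 9 ^ p"
    by simp
  finally show ?case
    by simp
qed simp

lemma power_div_power_minus_one_less:
  fixes a :: real
  assumes "3 \<le> a" and "1 \<le> p"
  shows "a ^ p / (a ^ p - 1) < 1 + 1 / 3 ^ p + 1 / 5 ^ p"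
proof -
  define A V W :: real where "A = a ^ p" and "V = 3 ^ p" and "W = 5 ^ p"
  have "3 ^ 1 \<le> V"
    unfolding V_def by (rule power_increasing) (use assms(2) in auto)
  moreover have "V \<le> A"
    unfolding A_def V_def using assms(1) by (rule power_mono) simp
  moreover have "W + V < V * V"
    using five_pow_plus_three_pow_less[OF assms(2)]
    by (simp add: V_def W_def flip: power_mult_distrib)
  moreover have "0 < W"
    by (simp add: W_def)
  ultimately have "A / (A - 1) = 1 + 1 / (A - 1)" "1 / (A - 1) \<le> 1 / (V - 1)"
    "1 / (V - 1) < 1 / V + 1 / W"
    by (auto simp: field_simps)
  then show ?thesis
    unfolding A_def V_def W_def by linarith
qed

theorem corollary2p4:
  fixes a :: real and k :: nat
  assumes "a \<ge> 3" and "k \<ge> 1"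
  shows "2 * fact (2 * k) / (pi ^ (2 * k) * (2 ^ (2 * k) - 1)) * (a ^ (2 * k) / (a ^ (2 * k) - 1))
           < \<bar>bernoulli_num (2 * k)\<bar>"
proof -
  define p where "p = 2 * k"
  have "1 \<le> p" "2 \<le> p"
    using assms(2) by (simp_all add: p_def)
  define C where "C = 2 * fact p / (pi ^ p * (2 ^ p - 1))"
  have "1 < (2::real) ^ p"
    using \<open>1 \<le> p\<close> by (simp add: one_less_power)
  then have "0 < C"
    by (simp add: C_def)
  then have "C * (a ^ p / (a ^ p - 1)) < C * (1 + 1 / 3 ^ p + 1 / 5 ^ p)"
    by (rule mult_strict_left_mono[OF power_div_power_minus_one_less[OF assms(1) \<open>1 \<le> p\<close>]])
  also have "\<dots> \<le> C * ((1 - 1 / 2 ^ p) * zeta p)"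
    using \<open>0 < C\<close> by (intro mult_left_mono zeta_odd_lower_bound[OF \<open>2 \<le> p\<close>]) simp
  also have "\<dots> = \<bar>bernoulli_num p\<bar>"
    using abs_bernoulli_num_even[OF assms(2)] \<open>1 < 2 ^ p\<close>
    by (simp add: C_def p_def field_simps power_mult_distrib)
  finally show ?thesis
    by (simp add: C_def p_def)
qed

end
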